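(* Let $D\ge 2$, $\eta=\mathrm{diag}(-1,1,\dots,1)$, and let $g_{\mu\nu}$, $f_{\mu\nu}$ be real symmetric invertible $D\times D$ matrices of Lorentzian signature $(-,+,\dots,+)$, with inverses $g^{\mu\nu}$, $f^{\mu\nu}$. If the matrix $g^{-1}f$ has no (real) negative eigenvalues, then there exist real matrices $e_A{}^\mu$ and $L^B{}_\nu$ with $\eta^{AB}e_A{}^\mu e_B{}^\nu=g^{\mu\nu}$ and $\eta_{AB}L^A{}_\mu L^B{}_\nu=f_{\mu\nu}$ such that $e_A{}^\mu L_{B\mu}=e_B{}^\mu L_{A\mu}$ for all $A,B$.
   Context: Greek indices are space-time indices and capital Latin indices are Lorentz indices, lowered and raised with $\eta_{AB}$ and $\eta^{AB}$ (so $L_{B\mu}=\eta_{BC}L^C{}_\mu$); repeated indices are summed. *)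

theory Defs
  imports "HOL-Analysis.Analysis"
begin

definition minkowski :: "'n::finite \<Rightarrow> real^'n^'n" where
  "minkowski t0 = (\<chi> A B. if A = B then (if A = t0 then -1 else 1) else 0)"

text \<open>Real symmetric invertible matrix of Lorentzian signature (-,+,...,+):
 by Sylvester's law of inertia, congruent to the Minkowski metric.\<close>
definition lorentzian :: "'n::finite \<Rightarrow> real^'n^'n \<Rightarrow> bool" where
  "lorentzian t0 g \<longleftrightarrow> transpose g = g \<and> invertible g \<and>
     (\<exists>P::real^'n^'n. invertible P \<and> transpose P ** g ** P = minkowski t0)"

definition real_eigenvalue :: "real^'n^'n \<Rightarrow> real \<Rightarrow> bool" where
  "real_eigenvalue M l \<longleftrightarrow> (\<exists>v. v \<noteq> 0 \<and> M *v v = l *\<^sub>R v)"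

end

theory Submission
  imports Defs
    "HOL-Computational_Algebra.Fundamental_Theorem_Algebra"
    "HOL-Computational_Algebra.Formal_Power_Series"
    "HOL-Number_Theory.Cong"
begin

text \<open>The matrix \<open>M = g\<^sup>-\<^sup>1f\<close> is self-adjoint for \<open>g\<close> and has no eigenvalue in \<open>(-\<infinity>, 0]\<close>,
  so it is annihilated by a real polynomial \<open>q\<close> all of whose roots are positive. Modulo such a
  \<open>q\<close> the variable \<open>x\<close> has a real polynomial square root \<open>r\<close>: interpolate the principal
  complex square root at the roots of \<open>q\<close>, then remove the remaining nilpotent error with the
  binomial series of \<open>\<surd>(1 + t)\<close>. Being a polynomial in \<open>M\<close>, \<open>R = r(M)\<close> is a
  \<open>g\<close>-self-adjoint square root of \<open>M\<close>, and for \<open>f = L\<^sup>T\<eta> L\<close> the vielbein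
  \<open>e = (R L\<^sup>-\<^sup>1)\<^sup>T\<close> does the job.\<close>

lemma matrix_inv_right:
  fixes A :: "real^'n^'n"
  assumes "invertible A"
  shows "A ** matrix_inv A = mat 1"
  using someI_ex[OF assms[unfolded invertible_def]] unfolding matrix_inv_def by auto

lemma matrix_inv_left:
  fixes A :: "real^'n^'n"
  assumes "invertible A"
  shows "matrix_inv A ** A = mat 1"
  using someI_ex[OF assms[unfolded invertible_def]] unfolding matrix_inv_def by auto

lemma matrix_inv_unique:
  fixes A B :: "real^'n^'n"
  assumes "A ** B = mat 1"
  shows "matrix_inv A = B"
proof -
  have "invertible A"
    using assms invertible_right_inverse by blast
  then have "matrix_inv A = matrix_inv A ** A ** B"
    using assms by (simp flip: matrix_mul_assoc)
  then show ?thesis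
    by (simp add: matrix_inv_left[OF \<open>invertible A\<close>])
qed

lemma invertible_matrix_inv:
  fixes A :: "real^'n^'n"
  assumes "invertible A"
  shows "invertible (matrix_inv A)"
  using matrix_inv_left[OF assms] matrix_inv_right[OF assms] invertible_def by blast

lemma matrix_add_rdistrib: "((A::real^'n^'n) + B) ** C = A ** C + B ** C"
  by (vector matrix_matrix_mult_def sum.distrib field_simps)

lemma transpose_add: "transpose ((A::real^'n^'n) + B) = transpose A + transpose B"
  by (vector transpose_def)

lemma transpose_zero: "transpose (0::real^'n^'n) = 0"
  by (vector transpose_def)

section \<open>Evaluating real polynomials at matrices\<close>

definition poly_matrix :: "real poly \<Rightarrow> real^'n^'n \<Rightarrow> real^'n^'n" where
  "poly_matrix p A = fold_coeffs (\<lambda>a X. a *\<^sub>R mat 1 + A ** X) p 0"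

lemma poly_matrix_0 [simp]: "poly_matrix 0 A = 0"
  by (simp add: poly_matrix_def)

lemma poly_matrix_pCons [simp]:
  "poly_matrix (pCons a p) A = a *\<^sub>R mat 1 + A ** poly_matrix p A"
  by (cases "p = 0 \<and> a = 0") (auto simp: poly_matrix_def)

lemma poly_matrix_add [simp]: "poly_matrix (p + q) A = poly_matrix p A + poly_matrix q A"
proof (induction p arbitrary: q)
  case (pCons a p)
  then show ?case
    by (cases q) (simp add: algebra_simps matrix_add_ldistrib)
qed simp

lemma poly_matrix_smult [simp]: "poly_matrix (smult c p) A = c *\<^sub>R poly_matrix p A"
  by (induction p) (simp_all add: algebra_simps matrix_scalar_ac flip: scalar_matrix_assoc)

lemma poly_matrix_mult [simp]: "poly_matrix (p * q) A = poly_matrix p A ** poly_matrix q A"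
  by (induction p)
    (simp_all add: matrix_add_rdistrib matrix_mul_assoc flip: scalar_matrix_assoc)

lemma poly_matrix_commute: "poly_matrix p A ** poly_matrix q A = poly_matrix q A ** poly_matrix p A"
  by (metis poly_matrix_mult mult.commute)

lemma poly_matrix_diff [simp]: "poly_matrix (p - q) A = poly_matrix p A - poly_matrix q A"
  using poly_matrix_add[of "p - q" q A] by (simp add: eq_diff_eq)

lemma poly_matrix_linear_factor: "poly_matrix [:-z, 1:] A = A - z *\<^sub>R mat 1"
  by simp

lemma poly_matrix_eqI_cong:
  assumes "[p = r] (mod q)" and "poly_matrix q A = 0"
  shows "poly_matrix p A = poly_matrix r A"
  using assms by (auto simp: cong_iff_lin)

lemma poly_matrix_selfadjoint:
  assumes "transpose A ** g = g ** A"
  shows "transpose (poly_matrix p A) ** g = g ** poly_matrix p A"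
proof (induction p)
  case (pCons a p)
  let ?X = "poly_matrix p A"
  have "?X ** A = A ** ?X"
    using poly_matrix_commute[of p A "[:0, 1:]"] by simp
  then have "transpose (A ** ?X) ** g = g ** (A ** ?X)"
    using pCons.IH assms by (metis matrix_transpose_mul matrix_mul_assoc)
  then show ?case
    by (simp add: transpose_add transpose_scalar matrix_add_rdistrib matrix_add_ldistrib
        matrix_scalar_ac flip: scalar_matrix_assoc)
qed (simp add: transpose_zero)

section \<open>Annihilating polynomials\<close>

lemma span_matrix_powers:
  assumes "X \<in> span ((\<lambda>i. poly_matrix (monom 1 i) A) ` {..<j})"
  shows "\<exists>p. (\<forall>i\<ge>j. coeff p i = 0) \<and> poly_matrix p A = X"
  using assms
proof (induction j arbitrary: X)
  case (Suc j)
  obtain k where "X - k *\<^sub>R poly_matrix (monom 1 j) A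
      \<in> span ((\<lambda>i. poly_matrix (monom 1 i) A) ` {..<j})"
    using Suc.prems by (auto simp: lessThan_Suc span_insert)
  then obtain p where p: "\<forall>i\<ge>j. coeff p i = 0"
    and "poly_matrix p A = X - k *\<^sub>R poly_matrix (monom 1 j) A"
    using Suc.IH by blast
  then have "poly_matrix (p + smult k (monom 1 j)) A = X"
    by simp
  moreover have "\<forall>i\<ge>Suc j. coeff (p + smult k (monom 1 j)) i = 0"
    using p by (simp add: coeff_monom)
  ultimately show ?case
    by blast
qed (auto intro: exI[of _ 0])

lemma poly_matrix_annihilator: "\<exists>q. q \<noteq> 0 \<and> poly_matrix q (A::real^'n^'n) = 0"
proof -
  let ?pow = "\<lambda>i. poly_matrix (monom 1 i) A"
  have "\<exists>j. ?pow j \<in> span (?pow ` {..<j})"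
  proof (rule ccontr)
    assume "\<nexists>j. ?pow j \<in> span (?pow ` {..<j})"
    then have independent: "?pow j \<notin> span (?pow ` {..<j})" for j
      by blast
    have "dim (?pow ` {..<j}) = j" for j
    proof (induction j)
      case (Suc j)
      then show ?case
        using independent[of j] by (simp add: lessThan_Suc dim_insert)
    qed simp
    moreover have "dim (?pow ` {..<Suc DIM(real^'n^'n)}) \<le> DIM(real^'n^'n)"
      by (rule dim_subset_UNIV)
    ultimately show False
      by simp
  qed
  then obtain j p where p: "\<forall>i\<ge>j. coeff p i = 0" and "poly_matrix p A = ?pow j"
    using span_matrix_powers by blast
  then have "poly_matrix (monom 1 j - p) A = 0"
    by simp
  moreover have "coeff (monom 1 j - p) j = 1"
    using p by simp
  ultimately show ?thesis
    by (metis one_neq_zero coeff_0)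
qed

lemma poly_matrix_annihilator_positive_roots:
  fixes A :: "real^'n^'n"
  assumes "\<And>z. z \<le> 0 \<Longrightarrow> invertible (A - z *\<^sub>R mat 1)"
  shows "\<exists>q. q \<noteq> 0 \<and> poly_matrix q A = 0 \<and> (\<forall>z. poly q z = 0 \<longrightarrow> z > 0)"
proof -
  have "\<exists>q. q \<noteq> 0 \<and> poly_matrix q A = 0 \<and> (\<forall>z. poly q z = 0 \<longrightarrow> z > 0)"
    if "q \<noteq> 0" "poly_matrix q A = 0" for q
    using that
  proof (induction "degree q" arbitrary: q rule: less_induct)
    case less
    show ?case
    proof (cases "\<forall>z. poly q z = 0 \<longrightarrow> z > 0")
      case False
      then obtain z where "poly q z = 0" "z \<le> 0"
        by force
      then obtain r where r: "q = [:-z, 1:] * r"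
        using poly_eq_0_iff_dvd by blast
      with less.prems have "r \<noteq> 0"
        by auto
      then have "degree q = Suc (degree r)"
        unfolding r by (subst degree_mult_eq) auto
      have "(A - z *\<^sub>R mat 1) ** poly_matrix r A = 0"
        using less.prems(2) unfolding r poly_matrix_mult poly_matrix_linear_factor .
      then have "poly_matrix r A = 0"
        using matrix_inv_left[OF assms[OF \<open>z \<le> 0\<close>]] by (metis matrix_mul_assoc matrix_mul_lid times0_right)
      then show ?thesis
        using less.hyps[of r] \<open>r \<noteq> 0\<close> \<open>degree q = Suc (degree r)\<close> by simp
    qed (use less.prems in blast)
  qed
  then show ?thesis
    using poly_matrix_annihilator[of A] by blast
qed

section \<open>A square root of the variable modulo a polynomial with positive roots\<close>

lemma exists_poly_interpolating:
  fixes v :: "'a::field \<Rightarrow> 'a"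
  assumes "finite Z"
  shows "\<exists>s. \<forall>z\<in>Z. poly s z = v z"
  using assms
proof (induction Z rule: finite_induct)
  case (insert a Z)
  then obtain s where s: "\<forall>z\<in>Z. poly s z = v z"
    by blast
  define w where "w = (\<Prod>z\<in>Z. [:-z, 1:])"
  have "poly w z = 0" if "z \<in> Z" for z
    using insert.hyps(1) that by (auto simp: w_def poly_prod)
  moreover have "poly w a \<noteq> 0"
    using insert.hyps by (auto simp: w_def poly_prod)
  ultimately have "\<forall>z\<in>insert a Z. poly (s + smult ((v a - poly s a) / poly w a) w) z = v z"
    using s by auto
  then show ?case
    by blast
qed simp

lemma map_poly_of_real_diff: "map_poly of_real (p - q) = map_poly of_real p - map_poly of_real q"
  by (rule poly_eqI) (simp add: coeff_map_poly)

lemma map_poly_of_real_mult: "map_poly of_real (p * q) = map_poly of_real p * map_poly of_real q"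
  by (rule poly_eqI) (simp add: coeff_map_poly coeff_mult)

lemma map_poly_of_real_power: "map_poly of_real (p ^ k) = map_poly of_real p ^ k"
  by (induction k) (simp_all add: map_poly_of_real_mult)

lemma poly_map_poly_of_real: "poly (map_poly of_real p) (of_real x) = of_real (poly p x)"
  by (induction p) (auto simp: map_poly_pCons)

lemma dvd_map_poly_of_real_imp_dvd:
  fixes p q :: "real poly"
  assumes "map_poly complex_of_real p dvd map_poly complex_of_real q"
  shows "p dvd q"
proof -
  obtain c where c: "map_poly complex_of_real q = map_poly complex_of_real p * c"
    using assms by (auto elim: dvdE)
  have "q = p * map_poly Re c"
  proof (rule poly_eqI)
    fix n
    have "coeff q n = Re (coeff (map_poly complex_of_real p * c) n)"
      by (simp flip: c add: coeff_map_poly)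
    also have "\<dots> = coeff (p * map_poly Re c) n"
      by (simp add: coeff_mult coeff_map_poly Re_sum)
    finally show "coeff q n = coeff (p * map_poly Re c) n" .
  qed
  then show ?thesis
    by simp
qed

text \<open>Over \<open>\<complex>\<close>, interpolate the principal square root at the roots of \<open>q\<close>: then
  every root of \<open>q\<close> is a root of \<open>x - p\<^sup>2\<close>, and the Nullstellensatz gives divisibility.
  Since the roots avoid \<open>\<real>\<^sub>\<le>\<^sub>0\<close>, \<open>csqrt\<close> commutes with conjugation on them, so the
  real part of the interpolant still takes the right values.\<close>

lemma exists_poly_sqrt_up_to_nilpotent:
  fixes q :: "real poly"
  assumes "q \<noteq> 0" and roots: "\<forall>z. poly q z = 0 \<longrightarrow> z > 0"
  shows "\<exists>p. [([:0, 1:] - p\<^sup>2) ^ degree q = 0] (mod q)"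
proof -
  let ?Q = "map_poly complex_of_real q"
  define Z where "Z = {z. poly ?Q z = 0}"
  have "?Q \<noteq> 0"
    using \<open>q \<noteq> 0\<close> by (simp add: map_poly_eq_0_iff)
  then have "finite Z"
    using poly_roots_finite Z_def by blast
  have Z_not_nonpos: "z \<notin> \<real>\<^sub>\<le>\<^sub>0" if "z \<in> Z" for z
  proof
    assume "z \<in> \<real>\<^sub>\<le>\<^sub>0"
    then have z: "z = of_real (Re z)" "Re z \<le> 0"
      by (auto simp: complex_nonpos_Reals_iff complex_eq_iff)
    have "complex_of_real (poly q (Re z)) = 0"
      using that z(1) poly_map_poly_of_real[of q "Re z", where 'a=complex]
      by (metis Z_def mem_Collect_eq)
    then have "poly q (Re z) = 0"
      by simp
    with roots z(2) show False
      by force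
  qed
  have Z_cnj: "cnj z \<in> Z" if "z \<in> Z" for z
    using that poly_cnj[of ?Q z] by (simp add: Z_def map_poly_map_poly o_def)
  obtain s where s: "\<forall>z\<in>Z. poly s z = csqrt z"
    using exists_poly_interpolating[OF \<open>finite Z\<close>] by blast
  define p where "p = map_poly Re s"
  have "map_poly complex_of_real p = smult (1/2) (s + map_poly cnj s)"
    by (rule poly_eqI) (simp add: p_def coeff_map_poly complex_eq_iff)
  then have p_sqrt: "poly (map_poly complex_of_real p) z = csqrt z" if "z \<in> Z" for z
    using that s Z_cnj cnj_csqrt[OF Z_not_nonpos[OF that]]
    by (simp add: poly_cnj) (metis complex_cnj_cnj)
  have "\<forall>z. poly ?Q z = 0 \<longrightarrow> poly (map_poly complex_of_real ([:0, 1:] - p\<^sup>2)) z = 0"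
    using p_sqrt by (simp add: Z_def map_poly_of_real_diff map_poly_of_real_power map_poly_pCons)
  then have "?Q dvd map_poly complex_of_real (([:0, 1:] - p\<^sup>2) ^ degree q)"
    using nullstellensatz_univariate[of ?Q] \<open>?Q \<noteq> 0\<close>
    by (simp add: map_poly_of_real_power degree_map_poly)
  then show ?thesis
    using dvd_map_poly_of_real_imp_dvd cong_0_iff by blast
qed

lemma cong_inverse_unit_minus_nilpotent:
  fixes a u n q :: "'a::unique_euclidean_ring"
  assumes "[a * u = 1] (mod q)" and "[n ^ k = 0] (mod q)"
  shows "[(a - n) * ((\<Sum>j<k. (u * n) ^ j) * u) = 1] (mod q)"
proof -
  let ?t = "u * n"
  have "[?t ^ k = 0] (mod q)"
    using cong_scalar_left[OF assms(2), of "u ^ k"] by (simp add: power_mult_distrib)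
  then have nilpotent: "[1 - ?t ^ k = 1 - 0] (mod q)"
    by (rule cong_diff[OF cong_refl])
  have "(a - n) * ((\<Sum>j<k. ?t ^ j) * u) = (a * u - ?t) * (\<Sum>j<k. ?t ^ j)"
    by (simp add: algebra_simps)
  also have "[\<dots> = (1 - ?t) * (\<Sum>j<k. ?t ^ j)] (mod q)"
    using assms(1) by (intro cong_mult cong_diff) auto
  also have "(1 - ?t) * (\<Sum>j<k. ?t ^ j) = 1 - ?t ^ k"
    by (simp add: one_diff_power_eq)
  also have "[\<dots> = 1] (mod q)"
    using nilpotent by simp
  finally show ?thesis .
qed

lemma cong_pcompose:
  assumes "[a = b] (mod m)"
  shows "[pcompose a K = pcompose b K] (mod pcompose m K)"
  using assms by (auto simp: cong_iff_lin pcompose_add pcompose_mult)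

lemma pcompose_power: "pcompose (p ^ k) q = pcompose p q ^ k"
  for p q :: "'a::comm_semiring_1 poly"
  by (induction k) (simp_all add: pcompose_1 pcompose_mult)

lemma truncated_sqrt_series_square:
  "[(\<Sum>j<k. monom ((1/2::real) gchoose j) j)\<^sup>2 = [:1, 1:]] (mod monom 1 k)"
proof -
  let ?c = "\<lambda>j. (1/2::real) gchoose j"
  let ?b = "\<Sum>j<k. monom (?c j) j"
  have coeff_b: "coeff ?b j = (if j < k then ?c j else 0)" for j
    by (simp add: coeff_sum coeff_monom)
  have "coeff (?b\<^sup>2) i = coeff [:1, 1:] i" if "i < k" for i
  proof -
    have "coeff (?b\<^sup>2) i = (\<Sum>j\<le>i. ?c j * ?c (i - j))"
      unfolding power2_eq_square coeff_mult using that by (intro sum.cong) (auto simp: coeff_b)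
    also have "\<dots> = (1/2 + 1/2) gchoose i"
      using gbinomial_Vandermonde[of "1/2::real" "1/2" i] by (simp add: atMost_atLeast0)
    also have "\<dots> = of_nat (1 choose i)"
      using binomial_gbinomial[of 1 i, where 'a=real] by simp
    also have "\<dots> = coeff [:1, 1:] i"
      by (cases i; cases "i - 1") (auto simp: coeff_pCons)
    finally show ?thesis .
  qed
  then show ?thesis
    by (simp add: cong_iff_dvd_diff monom_1_dvd_iff')
qed

lemma cong_sqrt_one_plus_nilpotent:
  fixes K q :: "real poly"
  assumes "[K ^ k = 0] (mod q)"
  shows "\<exists>B. [B\<^sup>2 = 1 + K] (mod q)"
proof -
  let ?b = "\<Sum>j<k. monom ((1/2::real) gchoose j) j"
  have "[pcompose (?b\<^sup>2) K = pcompose [:1, 1:] K] (mod pcompose (monom 1 k) K)"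
    using cong_pcompose[OF truncated_sqrt_series_square] .
  moreover have "pcompose (monom 1 k) K = K ^ k"
    by (simp add: monom_altdef pcompose_smult pcompose_power pcompose_pCons)
  ultimately have "[(pcompose ?b K)\<^sup>2 = 1 + K] (mod K ^ k)"
    by (simp add: pcompose_power pcompose_pCons one_pCons)
  then show ?thesis
    using assms cong_dvd_modulus cong_0_iff by blast
qed

lemma exists_unit_inverse_of_X_mod:
  fixes q :: "'a::field poly"
  assumes "poly q 0 \<noteq> 0"
  shows "\<exists>u. [[:0, 1:] * u = 1] (mod q)"
proof -
  obtain c s where q: "q = pCons c s"
    by (cases q)
  with assms have "c \<noteq> 0"
    by simp
  then have "1 - [:0, 1:] * smult (- 1 / c) s = smult (1 / c) q"
    by (simp add: q one_pCons)
  then show ?thesis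
    by (metis cong_iff_dvd_diff cong_sym dvd_smult dvd_refl)
qed

lemma exists_poly_sqrt_X_mod:
  fixes q :: "real poly"
  assumes "q \<noteq> 0" and "\<forall>z. poly q z = 0 \<longrightarrow> z > 0"
  shows "\<exists>r. [r\<^sup>2 = [:0, 1:]] (mod q)"
proof -
  let ?X = "[:0, 1:] :: real poly" and ?k = "degree q"
  obtain p where nilpotent: "[(?X - p\<^sup>2) ^ ?k = 0] (mod q)"
    using exists_poly_sqrt_up_to_nilpotent[OF assms] by blast
  define n where "n = ?X - p\<^sup>2"
  obtain u where "[?X * u = 1] (mod q)"
    using exists_unit_inverse_of_X_mod assms(2) by force
  then have "[(?X - n) * ((\<Sum>j<?k. (u * n) ^ j) * u) = 1] (mod q)"
    using cong_inverse_unit_minus_nilpotent nilpotent n_def by blast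
  then obtain w where w: "[p\<^sup>2 * w = 1] (mod q)"
    by (auto simp: n_def)
  have "[(w * n) ^ ?k = w ^ ?k * 0] (mod q)"
    using cong_scalar_left[OF nilpotent, of "w ^ ?k"] by (simp add: n_def power_mult_distrib)
  then obtain B where B: "[B\<^sup>2 = 1 + w * n] (mod q)"
    using cong_sqrt_one_plus_nilpotent by force
  have "(p * B)\<^sup>2 = p\<^sup>2 * B\<^sup>2"
    by (simp add: power_mult_distrib)
  also have "[\<dots> = p\<^sup>2 * (1 + w * n)] (mod q)"
    using B by (rule cong_scalar_left)
  also have "p\<^sup>2 * (1 + w * n) = p\<^sup>2 + (p\<^sup>2 * w) * n"
    by (simp add: algebra_simps)
  also have "[\<dots> = p\<^sup>2 + 1 * n] (mod q)"
    using w by (intro cong_add cong_mult) auto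
  also have "p\<^sup>2 + 1 * n = ?X"
    by (simp add: n_def)
  finally show ?thesis
    by blast
qed

section \<open>Square roots of self-adjoint matrices\<close>

lemma scaled_identity_matrix_vector_mult: "((c::real) *\<^sub>R mat 1) *v x = c *\<^sub>R (x::real^'n)"
  by (simp add: vec_eq_iff matrix_vector_mult_def mat_def if_distrib if_distribR sum.delta'
      cong: if_cong)

lemma invertible_shift_if_no_negative_eigenvalue:
  fixes M :: "real^'n^'n"
  assumes "invertible M" and "\<forall>l. real_eigenvalue M l \<longrightarrow> \<not> l < 0" and "z \<le> 0"
  shows "invertible (M - z *\<^sub>R mat 1)"
proof (cases "z = 0")
  case False
  show ?thesis
  proof (rule ccontr)
    assume "\<not> invertible (M - z *\<^sub>R mat 1)"
    then obtain x where "(M - z *\<^sub>R mat 1) *v x = 0" and "x \<noteq> 0"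
      using invertible_left_inverse matrix_left_invertible_ker by blast
    then have "real_eigenvalue M z"
      by (auto simp: real_eigenvalue_def matrix_vector_mult_diff_rdistrib
          scaled_identity_matrix_vector_mult)
    with assms(2,3) False show False
      by force
  qed
qed (use assms(1) in simp)

lemma exists_selfadjoint_matrix_sqrt:
  fixes M g :: "real^'n^'n"
  assumes "\<And>z. z \<le> 0 \<Longrightarrow> invertible (M - z *\<^sub>R mat 1)"
    and "transpose M ** g = g ** M"
  shows "\<exists>R. R ** R = M \<and> transpose R ** g = g ** R"
proof -
  obtain q where "q \<noteq> 0" "poly_matrix q M = 0" "\<forall>z. poly q z = 0 \<longrightarrow> z > 0"
    using poly_matrix_annihilator_positive_roots[OF assms(1)] by blast
  then obtain r where "[r * r = [:0, 1:]] (mod q)"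
    using exists_poly_sqrt_X_mod by (auto simp: power2_eq_square)
  then have "poly_matrix r M ** poly_matrix r M = M"
    using poly_matrix_eqI_cong \<open>poly_matrix q M = 0\<close> by fastforce
  with poly_matrix_selfadjoint[OF assms(2)] show ?thesis
    by blast
qed

section \<open>Vielbeins\<close>

lemma minkowski_square: "minkowski t0 ** minkowski t0 = mat 1"
proof -
  have "(\<Sum>k\<in>UNIV. minkowski t0 $ i $ k * minkowski t0 $ k $ j) = mat 1 $ i $ j" for i j
  proof -
    have "(\<Sum>k\<in>UNIV. minkowski t0 $ i $ k * minkowski t0 $ k $ j)
        = (\<Sum>k\<in>UNIV. if k = i then minkowski t0 $ i $ i * minkowski t0 $ i $ j else 0)"
      by (rule sum.cong) (auto simp: minkowski_def)
    also have "\<dots> = mat 1 $ i $ j"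
      by (simp add: minkowski_def mat_def)
    finally show ?thesis .
  qed
  then show ?thesis
    by (simp add: vec_eq_iff matrix_matrix_mult_def)
qed

lemma quadratic_form_index_eq:
  fixes H E :: "real^'n^'n"
  shows "(\<Sum>A\<in>UNIV. \<Sum>B\<in>UNIV. H $ A $ B * E $ A $ \<mu> * E $ B $ \<nu>)
    = (transpose E ** H ** E) $ \<mu> $ \<nu>"
proof -
  have "(transpose E ** H ** E) $ \<mu> $ \<nu>
      = (\<Sum>B\<in>UNIV. (\<Sum>A\<in>UNIV. E $ A $ \<mu> * H $ A $ B) * E $ B $ \<nu>)"
    by (simp add: matrix_matrix_mult_def transpose_def)
  also have "\<dots> = (\<Sum>B\<in>UNIV. \<Sum>A\<in>UNIV. H $ A $ B * E $ A $ \<mu> * E $ B $ \<nu>)"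
    by (simp add: sum_distrib_right sum_distrib_left mult_ac)
  also have "\<dots> = (\<Sum>A\<in>UNIV. \<Sum>B\<in>UNIV. H $ A $ B * E $ A $ \<mu> * E $ B $ \<nu>)"
    by (rule sum.swap)
  finally show ?thesis
    by simp
qed

lemma symmetric_matrix_entry:
  fixes X :: "real^'n^'n"
  assumes "transpose X = X"
  shows "X $ i $ j = X $ j $ i"
  using arg_cong[OF assms, of "\<lambda>X. X $ j $ i"] by (simp add: transpose_def)

lemma contraction_index_eq:
  fixes H e L :: "real^'n^'n"
  shows "(\<Sum>\<mu>\<in>UNIV. e $ A $ \<mu> * (\<Sum>C\<in>UNIV. H $ B $ C * L $ C $ \<mu>))
    = (e ** transpose (H ** L)) $ A $ B"
  by (simp add: matrix_matrix_mult_def transpose_def)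

lemma selfadjoint_inv_mult:
  fixes g f :: "real^'n^'n"
  assumes "transpose g = g" "invertible g" and "transpose f = f"
  shows "transpose (matrix_inv g ** f) ** g = g ** (matrix_inv g ** f)"
proof -
  have "transpose (matrix_inv g) ** g = mat 1"
    using arg_cong[OF matrix_inv_right[OF assms(2)], of transpose] assms(1)
    by (simp add: matrix_transpose_mul)
  then show ?thesis
    using assms(3) matrix_inv_right[OF assms(2)]
    by (simp add: matrix_transpose_mul matrix_mul_assoc flip: matrix_mul_assoc[of f])
qed

lemma congruent_to_involution:
  fixes f P H :: "real^'n^'n"
  assumes "invertible P" "transpose P ** f ** P = H" and "H ** H = mat 1"
  shows "transpose (matrix_inv P) ** H ** matrix_inv P = f"
    and "matrix_inv f = P ** H ** transpose P"
proof -
  let ?Pi = "matrix_inv P"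
  note PPi = matrix_inv_right[OF assms(1)] matrix_inv_left[OF assms(1)]
  have tPi: "transpose ?Pi ** transpose P = mat 1"
    using arg_cong[OF PPi(1), of transpose] by (simp add: matrix_transpose_mul)
  have "transpose ?Pi ** H ** ?Pi = (transpose ?Pi ** transpose P) ** f ** (P ** ?Pi)"
    by (simp add: assms(2)[symmetric] matrix_mul_assoc)
  then show f_eq: "transpose ?Pi ** H ** ?Pi = f"
    by (simp add: tPi PPi)
  have "f ** (P ** H ** transpose P) = transpose ?Pi ** H ** (?Pi ** P) ** H ** transpose P"
    by (simp add: f_eq[symmetric] matrix_mul_assoc)
  also have "\<dots> = transpose ?Pi ** (H ** H) ** transpose P"
    by (simp add: PPi(2) matrix_mul_assoc)
  also have "\<dots> = mat 1"
    by (simp add: assms(3) tPi)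
  finally show "matrix_inv f = P ** H ** transpose P"
    by (rule matrix_inv_unique)
qed

lemma commute_inverse_of_square:
  fixes R N :: "real^'n^'n"
  assumes "R ** R ** N = mat 1" and "N ** (R ** R) = mat 1"
  shows "R ** N = N ** R"
proof -
  have "N ** R = N ** R ** (R ** R ** N)"
    by (simp add: assms(1))
  also have "\<dots> = N ** (R ** R) ** (R ** N)"
    by (simp add: matrix_mul_assoc)
  also have "\<dots> = R ** N"
    by (simp add: assms(2))
  finally show ?thesis ..
qed

lemma selfadjoint_for_square_multiple:
  fixes R g :: "real^'n^'n"
  assumes "transpose R ** g = g ** R"
  shows "transpose R ** (g ** (R ** R)) = g ** (R ** R) ** R"
  using assms by (simp add: matrix_mul_assoc)

text \<open>Here \<open>L = P\<^sup>-\<^sup>1\<close> and \<open>e = (R P)\<^sup>T\<close>. The symmetry condition says that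
  \<open>P\<^sup>T f R P\<close> is symmetric, which holds because \<open>R\<close> is self-adjoint for \<open>f = g R\<^sup>2\<close> as well.\<close>

lemma vielbeins_from_selfadjoint_sqrt:
  fixes g f P H R :: "real^'n^'n"
  assumes g: "invertible g" and f: "transpose f = f" "invertible f"
    and P: "invertible P" "transpose P ** f ** P = H" and H: "H ** H = mat 1"
    and R: "R ** R = matrix_inv g ** f" "transpose R ** g = g ** R"
  shows "R ** P ** H ** transpose (R ** P) = matrix_inv g"
    and "transpose (matrix_inv P) ** H ** matrix_inv P = f"
    and "transpose (transpose (R ** P) ** transpose (H ** matrix_inv P))
      = transpose (R ** P) ** transpose (H ** matrix_inv P)"
proof -
  let ?Gi = "matrix_inv g" and ?N = "matrix_inv f ** g"
  note gGi = matrix_inv_right[OF g] matrix_inv_left[OF g]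
  show "transpose (matrix_inv P) ** H ** matrix_inv P = f"
    using congruent_to_involution(1)[OF P H] .
  have "R ** R ** ?N = ?Gi ** (f ** matrix_inv f) ** g"
    by (simp add: R(1) matrix_mul_assoc)
  then have RR_N: "R ** R ** ?N = mat 1"
    by (simp add: matrix_inv_right[OF f(2)] gGi)
  have "?N ** (R ** R) = matrix_inv f ** (g ** ?Gi) ** f"
    by (simp add: R(1) matrix_mul_assoc)
  then have N_RR: "?N ** (R ** R) = mat 1"
    by (simp add: matrix_inv_left[OF f(2)] gGi)
  have "transpose R = transpose R ** g ** ?Gi"
    by (simp add: gGi flip: matrix_mul_assoc)
  then have tR: "transpose R = g ** R ** ?Gi"
    by (simp only: R(2))
  have "R ** P ** H ** transpose (R ** P) = R ** ?N ** R ** ?Gi"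
    by (simp add: matrix_transpose_mul matrix_mul_assoc congruent_to_involution(2)[OF P H] tR)
  also have "\<dots> = ?N ** (R ** R) ** ?Gi"
    by (simp only: commute_inverse_of_square[OF RR_N N_RR]) (simp add: matrix_mul_assoc)
  finally show "R ** P ** H ** transpose (R ** P) = ?Gi"
    by (simp add: N_RR)
  have g_RR: "g ** (R ** R) = f"
    by (simp add: R(1) matrix_mul_assoc gGi)
  have fR: "transpose R ** f = f ** R"
    using selfadjoint_for_square_multiple[OF R(2)] by (simp only: g_RR)
  have "H ** matrix_inv P = transpose P ** f ** (P ** matrix_inv P)"
    by (simp add: P(2)[symmetric] matrix_mul_assoc)
  then have "transpose (R ** P) ** transpose (H ** matrix_inv P)
      = transpose P ** (transpose R ** f) ** P"
    by (simp add: matrix_inv_right[OF P(1)] f(1) matrix_transpose_mul matrix_mul_assoc)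
  then show "transpose (transpose (R ** P) ** transpose (H ** matrix_inv P))
      = transpose (R ** P) ** transpose (H ** matrix_inv P)"
    using fR by (simp add: matrix_transpose_mul f(1) matrix_mul_assoc)
qed

theorem proposition5:
  fixes t0 :: "'n::finite" and g f :: "real^'n^'n"
  assumes "CARD('n) \<ge> 2"
    and "lorentzian t0 g" and "lorentzian t0 f"
    and "\<forall>l. real_eigenvalue (matrix_inv g ** f) l \<longrightarrow> \<not> l < 0"
  shows "\<exists>e L :: real^'n^'n.
           (\<forall>\<mu> \<nu>. (\<Sum>A\<in>UNIV. \<Sum>B\<in>UNIV. minkowski t0 $ A $ B * e $ A $ \<mu> * e $ B $ \<nu>)
                    = matrix_inv g $ \<mu> $ \<nu>) \<and>
           (\<forall>\<mu> \<nu>. (\<Sum>A\<in>UNIV. \<Sum>B\<in>UNIV. minkowski t0 $ A $ B * L $ A $ \<mu> * L $ B $ \<nu>)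
                    = f $ \<mu> $ \<nu>) \<and>
           (\<forall>A B. (\<Sum>\<mu>\<in>UNIV. e $ A $ \<mu> * (\<Sum>C\<in>UNIV. minkowski t0 $ B $ C * L $ C $ \<mu>))
                 = (\<Sum>\<mu>\<in>UNIV. e $ B $ \<mu> * (\<Sum>C\<in>UNIV. minkowski t0 $ A $ C * L $ C $ \<mu>)))"
proof -
  obtain P where g: "transpose g = g" "invertible g" and f: "transpose f = f" "invertible f"
    and P: "invertible P" "transpose P ** f ** P = minkowski t0"
    using assms(2,3) unfolding lorentzian_def by blast
  let ?M = "matrix_inv g ** f"
  have "invertible ?M"
    by (intro invertible_mult invertible_matrix_inv g(2) f(2))
  then have "invertible (?M - z *\<^sub>R mat 1)" if "z \<le> 0" for z
    using invertible_shift_if_no_negative_eigenvalue assms(4) that by blast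
  then obtain R where "R ** R = ?M" "transpose R ** g = g ** R"
    using exists_selfadjoint_matrix_sqrt selfadjoint_inv_mult[OF g f(1)] by blast
  note vielbeins = vielbeins_from_selfadjoint_sqrt[OF g(2) f P minkowski_square this]
  show ?thesis
    by (intro exI[of _ "transpose (R ** P)"] exI[of _ "matrix_inv P"] conjI allI)
      (simp_all add: quadratic_form_index_eq contraction_index_eq vielbeins(1,2)
        symmetric_matrix_entry[OF vielbeins(3)])
qed

end
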